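(* Let $G$ be a finite abelian group of order $n$ and $S\subset G^n$ the set of bijections $\{1,\dots,n\}\to G$. If $\chi\in\hat G^n$ has exactly $m$ nontrivial coordinates, where $m\le n/2$, then \[ |\widehat{1_S}(\chi)|\le \binom{n}{m}^{-1/2}\frac{n!}{n^n}. \]
   Context: $\hat G$ is the dual group of $G$. For $\chi=(\chi_1,\dots,\chi_n)\in\hat G^n$, $\widehat{1_S}(\chi)=\frac{1}{n^n}\sum_{\pi\in S}\prod_{i=1}^n\chi_i(\pi(i))$. *)

theory Defs
  imports "HOL-Algebra.Algebra" Complex_Main
begin

definition character :: "('a, 'b) monoid_scheme \<Rightarrow> ('a \<Rightarrow> complex) \<Rightarrow> bool" where
  "character G \<chi> \<longleftrightarrow>
     (\<forall>x\<in>carrier G. cmod (\<chi> x) = 1) \<and>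
     (\<forall>x\<in>carrier G. \<forall>y\<in>carrier G. \<chi> (x \<otimes>\<^bsub>G\<^esub> y) = \<chi> x * \<chi> y)"

definition trivial_character :: "('a, 'b) monoid_scheme \<Rightarrow> ('a \<Rightarrow> complex) \<Rightarrow> bool" where
  "trivial_character G \<chi> \<longleftrightarrow> (\<forall>x\<in>carrier G. \<chi> x = 1)"

definition bijections :: "nat \<Rightarrow> ('a, 'b) monoid_scheme \<Rightarrow> (nat \<Rightarrow> 'a) set" where
  "bijections n G = {\<pi>. \<pi> \<in> extensional {1..n} \<and> bij_betw \<pi> {1..n} (carrier G)}"

definition fourier_1S :: "nat \<Rightarrow> ('a, 'b) monoid_scheme \<Rightarrow> (nat \<Rightarrow> 'a \<Rightarrow> complex) \<Rightarrow> complex" where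
  "fourier_1S n G \<chi> = (1 / of_nat n ^ n) * (\<Sum>\<pi>\<in>bijections n G. \<Prod>i\<in>{1..n}. \<chi> i (\<pi> i))"

end

theory Submission
  imports Defs
begin

text \<open>Write S(T, chi) for the sum over all injections f : T -> G of the products
  prod_(i in T) chi_i(f i); then n^n * fourier_1S n G chi = S({1..n}, chi). A coordinate with a
  trivial character just counts the still unused group elements, which pulls out a factor
  (n - m)! and leaves S(T, chi) for the set T of the m nontrivial coordinates. Fixing the images
  of T - {t} and summing chi_t over the remaining elements, orthogonality of characters gives
  S(T, chi) = - sum_(s in T - {t}) S(T - {t}, chi with chi_s replaced by chi_s chi_t).
  If chi_s chi_t is nontrivial, the summand is a sum of the same kind over m - 1 coordinates;
  otherwise it collapses to (n - m + 2) S(T - {s, t}, chi). By induction on m,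
  |S(T, chi)| <= sqrt (m! n (n - 1) ... (n - m + 1)) as long as 2 m <= n + 2, and
  (n - m)! sqrt (m! n (n - 1) ... (n - m + 1)) = n! / sqrt (n choose m).\<close>

definition injections :: "('a, 'b) monoid_scheme \<Rightarrow> nat set \<Rightarrow> (nat \<Rightarrow> 'a) set" where
  "injections G T = {f \<in> T \<rightarrow>\<^sub>E carrier G. inj_on f T}"

definition injection_sum :: "('a, 'b) monoid_scheme \<Rightarrow> nat set \<Rightarrow> (nat \<Rightarrow> 'a \<Rightarrow> complex) \<Rightarrow> complex" where
  "injection_sum G T \<chi> = (\<Sum>f\<in>injections G T. \<Prod>i\<in>T. \<chi> i (f i))"

definition falling_fact :: "nat \<Rightarrow> nat \<Rightarrow> real" where
  "falling_fact n k = (\<Prod>j<k. real (n - j))"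

lemma character_mult:
  assumes "character G \<phi>" "character G \<psi>"
  shows "character G (\<lambda>x. \<phi> x * \<psi> x)"
  using assms unfolding character_def by (simp add: norm_mult)

lemma sum_nontrivial_character:
  assumes "group G" "finite (carrier G)" "character G \<chi>" "\<not> trivial_character G \<chi>"
  shows "(\<Sum>g\<in>carrier G. \<chi> g) = 0"
proof -
  interpret group G by fact
  obtain h where h: "h \<in> carrier G" "\<chi> h \<noteq> 1"
    using assms(4) unfolding trivial_character_def by auto
  have "(\<Sum>g\<in>carrier G. \<chi> g) = (\<Sum>g\<in>carrier G. \<chi> (h \<otimes>\<^bsub>G\<^esub> g))"
    by (rule sum.reindex_bij_witness[where j="\<lambda>g. inv\<^bsub>G\<^esub> h \<otimes>\<^bsub>G\<^esub> g" and i="\<lambda>g. h \<otimes>\<^bsub>G\<^esub> g"])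
       (simp_all add: h(1) m_assoc[symmetric])
  also have "\<dots> = \<chi> h * (\<Sum>g\<in>carrier G. \<chi> g)"
    using assms(3) h unfolding character_def by (simp add: sum_distrib_left)
  finally have "(1 - \<chi> h) * (\<Sum>g\<in>carrier G. \<chi> g) = 0" by (simp add: algebra_simps)
  with h show ?thesis by simp
qed

lemma sum_nontrivial_character_outside_image:
  assumes "group G" "finite (carrier G)" "character G \<chi>" "\<not> trivial_character G \<chi>"
    and "f ` T \<subseteq> carrier G" "inj_on f T"
  shows "(\<Sum>g\<in>carrier G - f ` T. \<chi> g) = - (\<Sum>s\<in>T. \<chi> (f s))"
proof -
  have "(\<Sum>g\<in>carrier G - f ` T. \<chi> g) = (\<Sum>g\<in>carrier G. \<chi> g) - (\<Sum>g\<in>f ` T. \<chi> g)"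
    using assms(2,5) by (simp add: sum_diff finite_subset)
  then show ?thesis
    using sum_nontrivial_character[OF assms(1-4)] assms(6) by (simp add: sum.reindex)
qed

lemma finite_injections: "finite T \<Longrightarrow> finite (carrier G) \<Longrightarrow> finite (injections G T)"
  unfolding injections_def by (rule finite_subset[OF _ finite_PiE]) auto

lemma injectionsD: "f \<in> injections G T \<Longrightarrow> f ` T \<subseteq> carrier G \<and> inj_on f T"
  unfolding injections_def by auto

lemma bijections_eq_injections:
  assumes "finite (carrier G)" "card (carrier G) = n"
  shows "bijections n G = injections G {1..n}"
proof
  show "bijections n G \<subseteq> injections G {1..n}"
    unfolding bijections_def injections_def PiE_def bij_betw_def by auto
next
  show "injections G {1..n} \<subseteq> bijections n G"
  proof
    fix f assume f: "f \<in> injections G {1..n}"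
    then have sub: "f ` {1..n} \<subseteq> carrier G" and inj: "inj_on f {1..n}"
      and ext: "f \<in> extensional {1..n}"
      unfolding injections_def PiE_def Pi_def by auto
    have "card (f ` {1..n}) = card (carrier G)" using inj assms by (simp add: card_image)
    then have "f ` {1..n} = carrier G" using sub assms(1) by (intro card_subset_eq) auto
    then show "f \<in> bijections n G" unfolding bijections_def bij_betw_def using inj ext by auto
  qed
qed

text \<open>An injection on insert t T is an injection on T together with a value at t outside
  its image; the functions are extensional, so f(t := undefined) is the restriction.\<close>
lemma sum_injections_insert:
  assumes "finite T" "finite (carrier G)" "t \<notin> T"
  shows "sum H (injections G (insert t T))
       = (\<Sum>f\<in>injections G T. \<Sum>g\<in>carrier G - f ` T. H (f(t := g)))"
proof -
  have "(\<Sum>f\<in>injections G T. \<Sum>g\<in>carrier G - f ` T. H (f(t := g)))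
      = (\<Sum>(f, g)\<in>Sigma (injections G T) (\<lambda>f. carrier G - f ` T). H (f(t := g)))"
    using assms by (subst sum.Sigma) (auto simp: finite_injections)
  also have "\<dots> = sum H (injections G (insert t T))"
  proof (rule sum.reindex_bij_witness[where i="\<lambda>f. (f(t := undefined), f t)"
        and j="\<lambda>(f, g). f(t := g)"])
    fix p assume "p \<in> Sigma (injections G T) (\<lambda>f. carrier G - f ` T)"
    then obtain f g where p: "p = (f, g)" and f: "f \<in> injections G T"
      and g: "g \<in> carrier G" "g \<notin> f ` T" by auto
    have "f t = undefined" using f assms(3) by (auto simp: injections_def)
    then show "(((\<lambda>(f, g). f(t := g)) p)(t := undefined), (\<lambda>(f, g). f(t := g)) p t) = p"
      using p by (simp add: fun_eq_iff)
    show "(\<lambda>(f, g). f(t := g)) p \<in> injections G (insert t T)"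
      using p f g assms(3) by (auto simp: injections_def PiE_def extensional_def inj_on_def)
  next
    fix f assume f: "f \<in> injections G (insert t T)"
    then show "(\<lambda>(f, g). f(t := g)) (f(t := undefined), f t) = f" by simp
    from f have "f t \<notin> f ` T" and "f t \<in> carrier G"
      using assms(3) by (auto simp: injections_def inj_on_def)
    moreover have "(f(t := undefined)) ` T = f ` T" using assms(3) by auto
    moreover have "f(t := undefined) \<in> injections G T"
      using f assms(3) by (auto simp: injections_def PiE_def extensional_def inj_on_def)
    ultimately show "(f(t := undefined), f t) \<in> Sigma (injections G T) (\<lambda>f. carrier G - f ` T)"
      by simp
  qed (simp add: split_def)
  finally show ?thesis by simp
qed

lemma injection_sum_empty: "injection_sum G {} \<chi> = 1"
proof -
  have "injections G {} = {\<lambda>_. undefined}" unfolding injections_def by auto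
  then show ?thesis unfolding injection_sum_def by simp
qed

lemma injection_sum_insert:
  assumes "finite T" "finite (carrier G)" "t \<notin> T"
  shows "injection_sum G (insert t T) \<chi>
       = (\<Sum>f\<in>injections G T. (\<Prod>i\<in>T. \<chi> i (f i)) * (\<Sum>g\<in>carrier G - f ` T. \<chi> t g))"
proof -
  have "(\<Prod>i\<in>insert t T. \<chi> i ((f(t := g)) i)) = \<chi> t g * (\<Prod>i\<in>T. \<chi> i (f i))" for f g
  proof -
    have "(\<Prod>i\<in>T. \<chi> i ((f(t := g)) i)) = (\<Prod>i\<in>T. \<chi> i (f i))"
      using assms(3) by (intro prod.cong) auto
    then show ?thesis using assms(1,3) by simp
  qed
  then show ?thesis
    unfolding injection_sum_def sum_injections_insert[OF assms]
    by (simp add: sum_distrib_left mult.commute)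
qed

lemma injection_sum_insert_trivial:
  assumes "finite (carrier G)" "finite T" "u \<notin> T" "trivial_character G (\<chi> u)"
  shows "injection_sum G (insert u T) \<chi> = of_nat (card (carrier G) - card T) * injection_sum G T \<chi>"
proof -
  have count: "(\<Sum>g\<in>carrier G - f ` T. \<chi> u g) = of_nat (card (carrier G) - card T)"
    if "f \<in> injections G T" for f
  proof -
    have "f ` T \<subseteq> carrier G" "inj_on f T" using injectionsD[OF that] by auto
    then have "card (carrier G - f ` T) = card (carrier G) - card T"
      using assms(1,2) by (simp add: card_Diff_subset card_image finite_subset)
    moreover have "\<chi> u g = 1" if "g \<in> carrier G" for g
      using assms(4) that unfolding trivial_character_def by simp
    ultimately show ?thesis by simp
  qed
  have "injection_sum G (insert u T) \<chi>
      = (\<Sum>f\<in>injections G T. of_nat (card (carrier G) - card T) * (\<Prod>i\<in>T. \<chi> i (f i)))"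
    unfolding injection_sum_insert[OF assms(2,1,3)] by (intro sum.cong refl) (simp add: count)
  then show ?thesis unfolding injection_sum_def by (simp add: sum_distrib_left)
qed

lemma injection_sum_remove_trivial:
  assumes "finite (carrier G)" "finite T" "s \<in> T" "trivial_character G (\<chi> s)"
  shows "injection_sum G T \<chi> = of_nat (card (carrier G) - (card T - 1)) * injection_sum G (T - {s}) \<chi>"
  using injection_sum_insert_trivial[of G "T - {s}" s \<chi>] assms
  by (simp add: insert_absorb)

lemma injection_sum_union_trivial:
  assumes "finite (carrier G)" "finite U" "finite T" "T \<inter> U = {}"
    and "\<forall>u\<in>U. trivial_character G (\<chi> u)"
  shows "injection_sum G (T \<union> U) \<chi>
       = (\<Prod>j<card U. of_nat (card (carrier G) - card T - j)) * injection_sum G T \<chi>"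
  using assms(2,4,5)
proof (induction U rule: finite_induct)
  case empty
  then show ?case by simp
next
  case (insert u U)
  have "injection_sum G (T \<union> insert u U) \<chi>
      = of_nat (card (carrier G) - card (T \<union> U)) * injection_sum G (T \<union> U) \<chi>"
    using insert assms(1,3) by (simp add: injection_sum_insert_trivial)
  also have "card (T \<union> U) = card T + card U"
    using insert assms(3) by (intro card_Un_disjoint) auto
  finally show ?case using insert by (simp add: algebra_simps)
qed

lemma injection_sum_trivial_coordinates:
  assumes "finite (carrier G)" "card (carrier G) = card A" "finite A" "T \<subseteq> A"
    and "\<forall>u\<in>A - T. trivial_character G (\<chi> u)"
  shows "injection_sum G A \<chi> = of_nat (fact (card A - card T)) * injection_sum G T \<chi>"
proof -
  have "injection_sum G (T \<union> (A - T)) \<chi>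
      = (\<Prod>j<card (A - T). of_nat (card (carrier G) - card T - j)) * injection_sum G T \<chi>"
    by (rule injection_sum_union_trivial) (use assms finite_subset in auto)
  moreover have "T \<union> (A - T) = A" "card (A - T) = card A - card T"
    using assms(3,4) by (auto simp: card_Diff_subset finite_subset)
  moreover have "(\<Prod>j<card A - card T. of_nat (card A - card T - j))
               = (of_nat (fact (card A - card T)) :: complex)"
    unfolding fact_prod_rev[where 'a=nat] lessThan_atLeast0 by simp
  ultimately show ?thesis unfolding assms(2) by simp
qed

lemma injection_sum_insert_nontrivial:
  assumes "group G" "finite (carrier G)" "finite T" "t \<notin> T"
    and "character G (\<chi> t)" "\<not> trivial_character G (\<chi> t)"
  shows "injection_sum G (insert t T) \<chi>
       = - (\<Sum>s\<in>T. injection_sum G T (\<chi>(s := \<lambda>x. \<chi> s x * \<chi> t x)))"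
proof -
  have merge: "(\<Prod>i\<in>T. \<chi> i (f i)) * \<chi> t (f s) = (\<Prod>i\<in>T. (\<chi>(s := \<lambda>x. \<chi> s x * \<chi> t x)) i (f i))"
    if "s \<in> T" for s f
  proof -
    have "(\<Prod>i\<in>T - {s}. (\<chi>(s := \<lambda>x. \<chi> s x * \<chi> t x)) i (f i)) = (\<Prod>i\<in>T - {s}. \<chi> i (f i))"
      by (intro prod.cong) auto
    then show ?thesis
      using prod.remove[OF assms(3) that, of "\<lambda>i. \<chi> i (f i)"]
        prod.remove[OF assms(3) that, of "\<lambda>i. (\<chi>(s := \<lambda>x. \<chi> s x * \<chi> t x)) i (f i)"]
      by simp
  qed
  have outside: "(\<Sum>g\<in>carrier G - f ` T. \<chi> t g) = - (\<Sum>s\<in>T. \<chi> t (f s))"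
    if "f \<in> injections G T" for f
    using injectionsD[OF that]
    by (intro sum_nontrivial_character_outside_image) (use assms in auto)
  have "injection_sum G (insert t T) \<chi>
      = (\<Sum>f\<in>injections G T. (\<Prod>i\<in>T. \<chi> i (f i)) * - (\<Sum>s\<in>T. \<chi> t (f s)))"
    unfolding injection_sum_insert[OF assms(3,2,4)] by (intro sum.cong refl) (simp add: outside)
  also have "\<dots> = - (\<Sum>s\<in>T. \<Sum>f\<in>injections G T. (\<Prod>i\<in>T. \<chi> i (f i)) * \<chi> t (f s))"
    by (simp add: sum_distrib_left sum_negf sum.swap[of _ T])
  also have "\<dots> = - (\<Sum>s\<in>T. injection_sum G T (\<chi>(s := \<lambda>x. \<chi> s x * \<chi> t x)))"
    unfolding injection_sum_def by (simp add: merge)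
  finally show ?thesis .
qed

lemma falling_fact_Suc: "falling_fact n (Suc k) = falling_fact n k * real (n - k)"
  unfolding falling_fact_def by simp

lemma falling_fact_nonneg: "falling_fact n k \<ge> 0"
  unfolding falling_fact_def by (rule prod_nonneg) auto

lemma falling_fact_mult_fact: "m \<le> n \<Longrightarrow> falling_fact n m * fact (n - m) = fact n"
proof (induction m)
  case 0
  then show ?case by (simp add: falling_fact_def)
next
  case (Suc m)
  have "n - m = Suc (n - Suc m)" using Suc.prems by simp
  then have "real (n - m) * fact (n - Suc m) = (fact (n - m) :: real)"
    by (simp del: of_nat_Suc)
  then show ?case using Suc by (simp add: falling_fact_Suc mult.assoc)
qed

text \<open>The two ways of bounding a summand in the recursion, against the bound for m = j + 2.
  This is where 2m \<le> n + 2 is needed.\<close>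
lemma falling_fact_bound_step:
  fixes j n :: nat
  assumes "2 * j + 2 \<le> n"
  shows "real (Suc j) * max (sqrt (fact (Suc j) * falling_fact n (Suc j)))
                            (real (n - j) * sqrt (fact j * falling_fact n j))
     \<le> sqrt (fact (Suc (Suc j)) * falling_fact n (Suc (Suc j)))"
proof -
  define P where "P = fact j * falling_fact n j"
  define x where "x = real n - real j"
  have P0: "P \<ge> 0" unfolding P_def using falling_fact_nonneg by simp
  have x: "real (n - j) = x" "real (n - Suc j) = x - 1" using assms unfolding x_def by auto
  have xj: "x \<ge> real j + 2" using assms unfolding x_def by linarith
  have one: "fact (Suc j) * falling_fact n (Suc j) = (real j + 1) * x * P"
    unfolding P_def by (simp add: falling_fact_Suc x algebra_simps)
  have two: "fact (Suc (Suc j)) * falling_fact n (Suc (Suc j))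
           = ((real j + 2) * (x - 1)) * ((real j + 1) * x * P)"
    unfolding P_def by (simp add: falling_fact_Suc x algebra_simps)
  have sqrt_scale: "real (Suc j) * sqrt z = sqrt ((real j + 1)\<^sup>2 * z)" for z
    by (simp add: real_sqrt_mult)
  have "(real j + 1) * (real j + 1) \<le> (real j + 2) * (x - 1)"
    using xj by (intro mult_mono) auto
  then have "((real j + 1) * (real j + 1)) * ((real j + 1) * x * P)
           \<le> ((real j + 2) * (x - 1)) * ((real j + 1) * x * P)"
    using xj P0 by (intro mult_right_mono) auto
  then have b1: "real (Suc j) * sqrt (fact (Suc j) * falling_fact n (Suc j))
              \<le> sqrt (fact (Suc (Suc j)) * falling_fact n (Suc (Suc j)))"
    unfolding one two sqrt_scale power2_eq_square by (rule real_sqrt_le_mono)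
  have "(real j + 1) * x \<le> (real j + 2) * (x - 1)"
    using xj by (simp add: algebra_simps)
  then have "((real j + 1) * x) * ((real j + 1) * x * P) \<le> ((real j + 2) * (x - 1)) * ((real j + 1) * x * P)"
    using xj P0 by (intro mult_right_mono) auto
  then have "sqrt (((real j + 1) * x) * ((real j + 1) * x * P))
           \<le> sqrt (fact (Suc (Suc j)) * falling_fact n (Suc (Suc j)))"
    unfolding two by (rule real_sqrt_le_mono)
  moreover have "sqrt (((real j + 1) * x) * ((real j + 1) * x * P)) = real (Suc j) * (x * sqrt P)"
  proof -
    have square: "((real j + 1) * x) * ((real j + 1) * x * P) = ((real j + 1) * x)\<^sup>2 * P"
      by (simp add: power2_eq_square ac_simps)
    show ?thesis unfolding square real_sqrt_mult real_sqrt_abs using xj by simp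
  qed
  ultimately have "real (Suc j) * (x * sqrt P) \<le> sqrt (fact (Suc (Suc j)) * falling_fact n (Suc (Suc j)))"
    by simp
  then have b2: "real (Suc j) * (real (n - j) * sqrt (fact j * falling_fact n j))
              \<le> sqrt (fact (Suc (Suc j)) * falling_fact n (Suc (Suc j)))"
    unfolding x(1) P_def[symmetric] .
  show ?thesis using b1 b2 by (simp add: max_mult_distrib_left)
qed

lemma norm_injection_sum_le:
  assumes "group G" "finite (carrier G)" "card (carrier G) = n"
    and "finite T" "2 * card T \<le> n + 2"
    and "\<forall>i\<in>T. character G (\<chi> i) \<and> \<not> trivial_character G (\<chi> i)"
  shows "cmod (injection_sum G T \<chi>) \<le> sqrt (fact (card T) * falling_fact n (card T))"
  using assms(4-)
proof (induction "card T" arbitrary: T \<chi> rule: less_induct)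
  case less
  show ?case
  proof (cases "card T \<le> 1")
    case True
    then consider "card T = 0" | "card T = 1" by linarith
    then show ?thesis
    proof cases
      case 1
      then have "T = {}" using less.prems(1) by simp
      then show ?thesis by (simp add: injection_sum_empty falling_fact_def)
    next
      case 2
      then obtain t where t: "T = {t}" by (rule card_1_singletonE)
      then have "injection_sum G T \<chi> = 0"
        using injection_sum_insert_nontrivial[OF assms(1,2), of "{}" t \<chi>] less.prems(3) by simp
      then show ?thesis using falling_fact_nonneg by simp
    qed
  next
    case False
    then have "\<exists>j. card T = Suc (Suc j)" by presburger
    then obtain j where "card T = Suc (Suc j)" ..
    then obtain t T' where T: "T = insert t T'" "t \<notin> T'" "finite T'" "card T' = Suc j"
      by (auto simp: card_Suc_eq_finite)
    define Bd where "Bd = max (sqrt (fact (Suc j) * falling_fact n (Suc j)))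
                              (real (n - j) * sqrt (fact j * falling_fact n j))"
    have summand: "cmod (injection_sum G T' (\<chi>(s := \<lambda>x. \<chi> s x * \<chi> t x))) \<le> Bd" if "s \<in> T'" for s
    proof -
      define \<chi>' where "\<chi>' = \<chi>(s := \<lambda>x. \<chi> s x * \<chi> t x)"
      have char_s: "character G (\<chi>' s)"
        unfolding \<chi>'_def using less.prems(3) that T(1) by (auto intro: character_mult)
      show ?thesis
      proof (cases "trivial_character G (\<chi>' s)")
        case False
        then have "\<forall>i\<in>T'. character G (\<chi>' i) \<and> \<not> trivial_character G (\<chi>' i)"
          using char_s less.prems(3) T(1) unfolding \<chi>'_def by auto
        then have "cmod (injection_sum G T' \<chi>') \<le> sqrt (fact (Suc j) * falling_fact n (Suc j))"
          using less.hyps[of T' \<chi>'] less.prems(2) T by simp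
        then show ?thesis unfolding Bd_def \<chi>'_def by simp
      next
        case True
        have "injection_sum G (T' - {s}) \<chi>' = injection_sum G (T' - {s}) \<chi>"
          unfolding injection_sum_def \<chi>'_def by (intro sum.cong refl prod.cong) auto
        then have "injection_sum G T' \<chi>' = of_nat (n - j) * injection_sum G (T' - {s}) \<chi>"
          using injection_sum_remove_trivial[of G T' s \<chi>'] assms(2,3) T(3,4) that True by simp
        moreover have "cmod (injection_sum G (T' - {s}) \<chi>) \<le> sqrt (fact j * falling_fact n j)"
          using less.hyps[of "T' - {s}" \<chi>] less.prems(2,3) T that by simp
        ultimately have "cmod (injection_sum G T' \<chi>') \<le> real (n - j) * sqrt (fact j * falling_fact n j)"
          by (simp add: norm_mult mult_left_mono)
        then show ?thesis unfolding Bd_def \<chi>'_def by (rule max.coboundedI2)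
      qed
    qed
    have "injection_sum G T \<chi> = - (\<Sum>s\<in>T'. injection_sum G T' (\<chi>(s := \<lambda>x. \<chi> s x * \<chi> t x)))"
      unfolding T(1) using injection_sum_insert_nontrivial[OF assms(1,2) T(3,2)] less.prems(3) T(1)
      by simp
    then have "cmod (injection_sum G T \<chi>)
        \<le> (\<Sum>s\<in>T'. cmod (injection_sum G T' (\<chi>(s := \<lambda>x. \<chi> s x * \<chi> t x))))"
      by (simp add: norm_sum)
    also have "\<dots> \<le> real (card T') * Bd"
      using summand by (rule sum_bounded_above)
    also have "\<dots> \<le> sqrt (fact (card T) * falling_fact n (card T))"
      using falling_fact_bound_step[of j n] less.prems(2) T unfolding Bd_def by simp
    finally show ?thesis .
  qed
qed

lemma fact_mult_sqrt_falling_fact: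
  assumes "m \<le> n"
  shows "fact (n - m) * sqrt (fact m * falling_fact n m) = fact n / sqrt (real (n choose m))"
proof -
  define F where "F = falling_fact n m"
  have F: "F * fact (n - m) = fact n" "F \<ge> 0"
    unfolding F_def using falling_fact_mult_fact[OF assms] falling_fact_nonneg by auto
  have "real (fact m * fact (n - m) * (n choose m)) = real (fact n)"
    using binomial_fact_lemma[OF assms] by (rule arg_cong)
  then have "fact m * real (n choose m) * fact (n - m) = F * fact (n - m)"
    unfolding of_nat_mult of_nat_fact F(1) by (simp add: ac_simps)
  then have "real (n choose m) = F / fact m" by (simp add: field_simps)
  then have "sqrt (real (n choose m)) * (fact (n - m) * sqrt (fact m * F))
           = fact (n - m) * sqrt (F * F)"
    by (simp add: real_sqrt_mult[symmetric] field_simps)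
  also have "\<dots> = fact n" using F by (simp add: mult.commute)
  finally show ?thesis
    using assms unfolding F_def by (simp add: field_simps)
qed

theorem lemma4p1:
  fixes G :: "('a, 'b) monoid_scheme" and n m :: nat and \<chi> :: "nat \<Rightarrow> 'a \<Rightarrow> complex"
  assumes "comm_group G"
    and "finite (carrier G)"
    and "card (carrier G) = n"
    and "\<forall>i\<in>{1..n}. character G (\<chi> i)"
    and "card {i\<in>{1..n}. \<not> trivial_character G (\<chi> i)} = m"
    and "real m \<le> real n / 2"
  shows "cmod (fourier_1S n G \<chi>) \<le> 1 / sqrt (real (n choose m)) * (fact n / real n ^ n)"
proof -
  define T where "T = {i\<in>{1..n}. \<not> trivial_character G (\<chi> i)}"
  have grp: "group G" using assms(1) by (rule comm_group.axioms(2))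
  have mn: "m \<le> n" using assms(6) by linarith
  have T: "T \<subseteq> {1..n}" "card T = m" using assms(5) unfolding T_def by auto
  have trivial: "\<forall>u\<in>{1..n} - T. trivial_character G (\<chi> u)" unfolding T_def by auto
  have characters: "\<forall>i\<in>T. character G (\<chi> i) \<and> \<not> trivial_character G (\<chi> i)"
    using assms(4) unfolding T_def by auto
  have small: "2 * m \<le> n + 2" using assms(6) by linarith
  have "injection_sum G {1..n} \<chi> = of_nat (fact (n - m)) * injection_sum G T \<chi>"
    using injection_sum_trivial_coordinates[OF assms(2) _ _ T(1) trivial] assms(3) T(2) by simp
  then have "cmod (fourier_1S n G \<chi>) = fact (n - m) * cmod (injection_sum G T \<chi>) / real n ^ n"
    unfolding fourier_1S_def bijections_eq_injections[OF assms(2,3)] injection_sum_def[symmetric]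
    by (simp add: norm_mult norm_divide norm_power)
  also have "\<dots> \<le> fact (n - m) * sqrt (fact m * falling_fact n m) / real n ^ n"
    using norm_injection_sum_le[OF grp assms(2,3) finite_subset[OF T(1)] _ characters] T(2) small
    by (intro divide_right_mono mult_left_mono) auto
  also have "\<dots> = 1 / sqrt (real (n choose m)) * (fact n / real n ^ n)"
    by (simp add: fact_mult_sqrt_falling_fact[OF mn])
  finally show ?thesis .
qed

end
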